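(* Let $p\in\mathbb{R}$. If $z=(v,m,\sigma,e)\in Z$ satisfies $m\ne(e+p)v$ and $\lambda_{\max}(v\otimes v-\sigma)<e$, then $z\in K^{\Lambda,2}$.
   Context: $\mathcal S_0^{2\times2}$ is the space of traceless symmetric $2\times2$ matrices, $Z:=\mathbb{R}^2\times\mathbb{R}^2\times\mathcal S_0^{2\times2}\times\mathbb{R}$, $\lambda_{\max}$ the largest eigenvalue, $K:=\{z\in Z: v\otimes v-\sigma=e\,\mathrm{Id},\ m=(e+p)v\}$. The wave cone is $\Lambda=\{\bar z=(\bar v,\bar m,\bar\sigma,\bar e)\in Z:\ (\bar v,\bar e)\neq0\text{ and there is }0\ne(\xi,c)\in\mathbb{R}^2\times\mathbb{R}\text{ with }(\bar\sigma+\bar e\,\mathrm{Id})\xi+c\bar v=0,\ \bar v\cdot\xi=0,\ \bar m\cdot\xi+c\bar e=0\}$. For $A\subset Z$, $A^{\Lambda,1}:=A\cup\{sz_1+(1-s)z_2: z_1,z_2\in A,\ s\in[0,1],\ z_1-z_2\in\Lambda\}$; $K^{\Lambda,1}:=(K)^{\Lambda,1}$ and $K^{\Lambda,2}:=(K^{\Lambda,1})^{\Lambda,1}$. *)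

theory Defs
  imports "HOL-Analysis.Analysis"
begin

type_synonym zpt = "(real^2) * (real^2) * (real^2^2) * real"

definition Zspace :: "zpt set" where
  "Zspace = {(v, m, \<sigma>, e). transpose \<sigma> = \<sigma> \<and> trace \<sigma> = 0}"

definition outer :: "real^2 \<Rightarrow> real^2 \<Rightarrow> real^2^2" where
  "outer a b = (\<chi> i j. a $ i * b $ j)"

definition Kset :: "real \<Rightarrow> zpt set" where
  "Kset p = {(v, m, \<sigma>, e). (v, m, \<sigma>, e) \<in> Zspace \<and>
                outer v v - \<sigma> = e *\<^sub>R mat 1 \<and> m = (e + p) *\<^sub>R v}"

definition wave_cone :: "zpt set" where
  "wave_cone = {(v, m, \<sigma>, e). (v, m, \<sigma>, e) \<in> Zspace \<and> (v, e) \<noteq> 0 \<and>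
      (\<exists>\<xi> :: real^2. \<exists>c :: real. (\<xi>, c) \<noteq> 0 \<and>
         (\<sigma> + e *\<^sub>R mat 1) *v \<xi> + c *\<^sub>R v = 0 \<and> v \<bullet> \<xi> = 0 \<and> m \<bullet> \<xi> + c * e = 0)}"

definition lam1 :: "zpt set \<Rightarrow> zpt set" where
  "lam1 A = A \<union> {s *\<^sub>R z1 + (1 - s) *\<^sub>R z2 | s z1 z2.
                 z1 \<in> A \<and> z2 \<in> A \<and> 0 \<le> s \<and> s \<le> 1 \<and> z1 - z2 \<in> wave_cone}"

definition lambda_max :: "real^2^2 \<Rightarrow> real" where
  "lambda_max M = Max {l. \<exists>x :: real^2. x \<noteq> 0 \<and> M *v x = l *\<^sub>R x}"

end

theory Submission
  imports Defs
begin

(* Describe a point of Z by v, P = e Id - (v \<otimes> v - \<sigma>) and r = m - (e + p) v. Then K is the set of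
   points with P = 0 and r = 0, and \<lambda>max(v \<otimes> v - \<sigma>) < e says that P is positive definite.
   Two points with the same P and r but different v differ by an element of the wave cone, and the
   s, 1 - s average of those at v + (1 - s) d and v - s d is the point at v with P increased by
   s(1 - s) d \<otimes> d and r by a multiple of d; s and d can be chosen to make these increments any
   given u \<otimes> u and \<kappa> u. Writing P = w \<otimes> w + u \<otimes> u with w, u a basis and r = \<mu> w + \<kappa> u, two
   such laminations lead from K to z. *)

(* e is forced by the trace condition: trace \<sigma> = trace P + v \<bullet> v - 2 e. *)
definition Zparam :: "real \<Rightarrow> real^2 \<Rightarrow> real^2^2 \<Rightarrow> real^2 \<Rightarrow> zpt" where
  "Zparam p v P r = (let e = (trace P + v \<bullet> v) / 2 in
     (v, r + (e + p) *\<^sub>R v, P + outer v v - e *\<^sub>R mat 1, e))"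

lemma transpose_eq_self_iff_2: "transpose (A :: real^2^2) = A \<longleftrightarrow> A$1$2 = A$2$1"
  by (auto simp: transpose_def vec_eq_iff forall_2)

lemma transpose_outer_self: "transpose (outer w w) = outer w w"
  by (simp add: transpose_eq_self_iff_2 outer_def)

lemma Zparam_in_Zspace: "transpose P = P \<Longrightarrow> Zparam p v P r \<in> Zspace"
  unfolding Zparam_def Let_def Zspace_def transpose_eq_self_iff_2
  by (simp add: trace_def sum_2 outer_def mat_def inner_vec_def)

lemma Zparam_0_0_in_Kset: "Zparam p v 0 0 \<in> Kset p"
proof -
  have "Zparam p v 0 0 \<in> Zspace"
    by (simp add: Zparam_in_Zspace transpose_eq_self_iff_2)
  then show ?thesis
    by (simp add: Zparam_def Let_def Kset_def trace_def)
qed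

lemma Zparam_convex_combination:
  "s *\<^sub>R Zparam p (v + (1 - s) *\<^sub>R d) P r + (1 - s) *\<^sub>R Zparam p (v - s *\<^sub>R d) P r
   = Zparam p v (P + (s * (1 - s)) *\<^sub>R outer d d)
       (r + (s * (1 - s) * (v \<bullet> d + (1 - 2 * s) * (d \<bullet> d) / 2)) *\<^sub>R d)"
  by (simp add: Zparam_def Let_def vec_eq_iff forall_2 sum_2 inner_vec_def trace_def outer_def
      mat_def field_simps)

lemma Zspace_diff: "z1 \<in> Zspace \<Longrightarrow> z2 \<in> Zspace \<Longrightarrow> z1 - z2 \<in> Zspace"
  by (cases z1, cases z2) (simp add: Zspace_def transpose_eq_self_iff_2 trace_sub)

lemma outer_mult_vector: "outer a b *v x = (b \<bullet> x) *\<^sub>R a"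
  by (simp add: vec_eq_iff forall_2 outer_def matrix_vector_mult_def sum_2 inner_vec_def
      algebra_simps)

lemma Zparam_diff_in_wave_cone:
  assumes "v1 \<noteq> v2" and "transpose P = P"
  shows "Zparam p v1 P r - Zparam p v2 P r \<in> wave_cone"
proof -
  define \<xi> :: "real^2" where "\<xi> = vector [v2$2 - v1$2, v1$1 - v2$1]"
  have "\<xi> \<noteq> 0" and \<xi>: "v2 \<bullet> \<xi> = v1 \<bullet> \<xi>"
    using \<open>v1 \<noteq> v2\<close> by (auto simp: \<xi>_def vec_eq_iff forall_2 inner_vec_def sum_2 algebra_simps)
  define e1 e2 where "e1 = (trace P + v1 \<bullet> v1) / 2" and "e2 = (trace P + v2 \<bullet> v2) / 2"
  have diff: "Zparam p v1 P r - Zparam p v2 P r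
      = (v1 - v2, (e1 + p) *\<^sub>R v1 - (e2 + p) *\<^sub>R v2,
         outer v1 v1 - outer v2 v2 - (e1 - e2) *\<^sub>R mat 1, e1 - e2)"
    by (simp add: Zparam_def Let_def e1_def e2_def algebra_simps)
  have "(v1 - v2, (e1 + p) *\<^sub>R v1 - (e2 + p) *\<^sub>R v2,
      outer v1 v1 - outer v2 v2 - (e1 - e2) *\<^sub>R mat 1, e1 - e2) \<in> Zspace"
    using Zspace_diff[OF Zparam_in_Zspace Zparam_in_Zspace, OF assms(2) assms(2)] diff by metis
  moreover have "(v1 - v2, e1 - e2) \<noteq> 0" and "(\<xi>, - (v1 \<bullet> \<xi>)) \<noteq> 0"
    using \<open>v1 \<noteq> v2\<close> \<open>\<xi> \<noteq> 0\<close> by (simp_all add: zero_prod_def)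
  moreover have "(outer v1 v1 - outer v2 v2 - (e1 - e2) *\<^sub>R mat 1 + (e1 - e2) *\<^sub>R mat 1) *v \<xi>
      + (- (v1 \<bullet> \<xi>)) *\<^sub>R (v1 - v2) = 0"
    using \<xi> by (simp add: outer_mult_vector matrix_vector_mult_diff_rdistrib algebra_simps)
  moreover have "(v1 - v2) \<bullet> \<xi> = 0"
    using \<xi> by (simp add: inner_diff_left)
  moreover have "((e1 + p) *\<^sub>R v1 - (e2 + p) *\<^sub>R v2) \<bullet> \<xi> + (- (v1 \<bullet> \<xi>)) * (e1 - e2) = 0"
    using \<xi> by (simp add: inner_diff_left algebra_simps)
  ultimately show ?thesis
    unfolding diff wave_cone_def by blast
qed

lemma lam1I:
  "z1 \<in> A \<Longrightarrow> z2 \<in> A \<Longrightarrow> 0 \<le> s \<Longrightarrow> s \<le> 1 \<Longrightarrow> z1 - z2 \<in> wave_cone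
   \<Longrightarrow> s *\<^sub>R z1 + (1 - s) *\<^sub>R z2 \<in> lam1 A"
  unfolding lam1_def by blast

lemma exists_rank_one_split:
  fixes u v :: "real^2"
  assumes "u \<noteq> 0"
  obtains s d where "0 < s" "s < 1" "d \<noteq> 0" "(s * (1 - s)) *\<^sub>R outer d d = outer u u"
    "(s * (1 - s) * (v \<bullet> d + (1 - 2 * s) * (d \<bullet> d) / 2)) *\<^sub>R d = \<kappa> *\<^sub>R u"
proof -
  (* d = 2 S u with s(1 - s) = 1/(4 S^2); then 1 - 2 s = \<beta>/S tunes the coefficient of u *)
  have uu: "u \<bullet> u > 0"
    using assms by simp
  define \<beta> where "\<beta> = (\<kappa> - v \<bullet> u) / (u \<bullet> u)"
  define S where "S = sqrt (1 + \<beta>\<^sup>2)"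
  have "S > 0" and S2: "S\<^sup>2 = 1 + \<beta>\<^sup>2"
    unfolding S_def by (simp_all add: add_pos_nonneg)
  have "\<bar>\<beta>\<bar> < S"
    unfolding S_def by (metis abs_ge_zero add.commute less_add_one real_sqrt_abs real_sqrt_less_mono)
  define s where "s = (1 - \<beta> / S) / 2"
  define d where "d = (2 * S) *\<^sub>R u"
  have ss: "s * (1 - s) = 1 / (4 * S\<^sup>2)"
    unfolding s_def using \<open>S > 0\<close> S2 by (simp add: field_simps power2_eq_square)
  have s12: "1 - 2 * s = \<beta> / S"
    unfolding s_def by (simp add: field_simps)
  have "0 < s" "s < 1"
    using \<open>\<bar>\<beta>\<bar> < S\<close> \<open>S > 0\<close> by (auto simp: s_def abs_less_iff field_simps)
  moreover have "d \<noteq> 0"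
    using \<open>S > 0\<close> assms by (simp add: d_def)
  moreover have "(s * (1 - s)) *\<^sub>R outer d d = outer u u"
    unfolding ss using \<open>S > 0\<close> by (simp add: d_def vec_eq_iff outer_def field_simps power2_eq_square)
  moreover have "s * (1 - s) * (v \<bullet> d + (1 - 2 * s) * (d \<bullet> d) / 2) * (2 * S) = \<kappa>"
    unfolding ss s12 d_def \<beta>_def using \<open>S > 0\<close> uu
    by (simp add: field_simps power2_eq_square inner_commute)
  then have "(s * (1 - s) * (v \<bullet> d + (1 - 2 * s) * (d \<bullet> d) / 2)) *\<^sub>R d = \<kappa> *\<^sub>R u"
    by (simp add: d_def)
  ultimately show ?thesis
    using that by blast
qed

lemma Zparam_add_rank_one_in_lam1:
  assumes A: "\<And>v. Zparam p v P r \<in> A" and "transpose P = P" and "w \<noteq> 0"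
  shows "Zparam p v (P + outer w w) (r + \<mu> *\<^sub>R w) \<in> lam1 A"
proof -
  obtain s d where s: "0 < s" "s < 1" and "d \<noteq> 0"
    and dd: "(s * (1 - s)) *\<^sub>R outer d d = outer w w"
    and dr: "(s * (1 - s) * (v \<bullet> d + (1 - 2 * s) * (d \<bullet> d) / 2)) *\<^sub>R d = \<mu> *\<^sub>R w"
    using exists_rank_one_split[OF \<open>w \<noteq> 0\<close>] by metis
  have "v + (1 - s) *\<^sub>R d \<noteq> v - s *\<^sub>R d"
    using \<open>d \<noteq> 0\<close> by (simp add: algebra_simps)
  then have "s *\<^sub>R Zparam p (v + (1 - s) *\<^sub>R d) P r + (1 - s) *\<^sub>R Zparam p (v - s *\<^sub>R d) P r
      \<in> lam1 A"
    using s by (intro lam1I A Zparam_diff_in_wave_cone \<open>transpose P = P\<close>) auto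
  then show ?thesis
    unfolding Zparam_convex_combination dd dr .
qed

lemma eigenvalue_sym2:
  fixes U :: "real^2^2"
  assumes "U$1$2 = U$2$1" and "x \<noteq> 0" and "U *v x = l *\<^sub>R x"
  shows "(U$1$1 - l) * (U$2$2 - l) = (U$1$2)\<^sup>2"
proof -
  have e1: "(U$1$1 - l) * x$1 + U$1$2 * x$2 = 0" and e2: "U$1$2 * x$1 + (U$2$2 - l) * x$2 = 0"
    using assms(1) arg_cong[OF assms(3), of "\<lambda>y. y$1"] arg_cong[OF assms(3), of "\<lambda>y. y$2"]
    by (simp_all add: matrix_vector_mult_def sum_2 algebra_simps)
  have "((U$1$1 - l) * (U$2$2 - l) - (U$1$2)\<^sup>2) * x$1
      = (U$2$2 - l) * ((U$1$1 - l) * x$1 + U$1$2 * x$2) - U$1$2 * (U$1$2 * x$1 + (U$2$2 - l) * x$2)"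
    and "((U$1$1 - l) * (U$2$2 - l) - (U$1$2)\<^sup>2) * x$2
      = (U$1$1 - l) * (U$1$2 * x$1 + (U$2$2 - l) * x$2) - U$1$2 * ((U$1$1 - l) * x$1 + U$1$2 * x$2)"
    by (simp_all add: algebra_simps power2_eq_square)
  then have "((U$1$1 - l) * (U$2$2 - l) - (U$1$2)\<^sup>2) * x$i = 0" for i
    using e1 e2 exhaust_2[of i] by auto
  moreover obtain i where "x$i \<noteq> 0"
    using \<open>x \<noteq> 0\<close> by (auto simp: vec_eq_iff)
  ultimately have "(U$1$1 - l) * (U$2$2 - l) - (U$1$2)\<^sup>2 = 0"
    by (metis mult_eq_0_iff)
  then show ?thesis
    by simp
qed

lemma lambda_max_sym2:
  fixes U :: "real^2^2"
  assumes "U$1$2 = U$2$1"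
  shows "lambda_max U = (U$1$1 + U$2$2) / 2 + sqrt (((U$1$1 - U$2$2) / 2)\<^sup>2 + (U$1$2)\<^sup>2)"
proof -
  define a b d where "a = U$1$1" and "b = U$1$2" and "d = U$2$2"
  define D where "D = sqrt (((a - d) / 2)\<^sup>2 + b\<^sup>2)"
  define L where "L = (a + d) / 2 + D"
  define Sp where "Sp = {l. \<exists>x :: real^2. x \<noteq> 0 \<and> U *v x = l *\<^sub>R x}"
  have "D \<ge> 0" and D2: "D\<^sup>2 = ((a - d) / 2)\<^sup>2 + b\<^sup>2"
    unfolding D_def by simp_all
  have roots: "(a - l) * (d - l) = b\<^sup>2 \<longleftrightarrow> l = (a + d) / 2 + D \<or> l = (a + d) / 2 - D" for l
  proof -
    have "(a - l) * (d - l) = b\<^sup>2 \<longleftrightarrow> (l - (a + d) / 2)\<^sup>2 = D\<^sup>2"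
      unfolding D2 by (auto simp: power2_eq_square field_simps)
    then show ?thesis
      by (auto simp: power2_eq_iff)
  qed
  have "Sp \<subseteq> {L, (a + d) / 2 - D}"
    using eigenvalue_sym2[OF assms] roots by (auto simp: Sp_def L_def a_def b_def d_def)
  then have "finite Sp" and "\<forall>l \<in> Sp. l \<le> L"
    using \<open>D \<ge> 0\<close> finite_subset by (auto simp: L_def)
  moreover have "L \<in> Sp"
  proof (cases "b = 0 \<and> L = a")
    case True
    then have "U *v vector [1, 0] = L *\<^sub>R vector [1, 0]"
      using assms by (simp add: vec_eq_iff forall_2 matrix_vector_mult_def sum_2 a_def b_def)
    then show ?thesis
      unfolding Sp_def by (auto simp: vec_eq_iff forall_2 intro!: exI[of _ "vector [1, 0]"])
  next
    case False
    have "(a - L) * (d - L) = b\<^sup>2"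
      using roots L_def by blast
    then have "U *v vector [b, L - a] = L *\<^sub>R vector [b, L - a]"
      using assms
      by (simp add: vec_eq_iff forall_2 matrix_vector_mult_def sum_2 a_def b_def d_def
          algebra_simps power2_eq_square)
    moreover have "vector [b, L - a] \<noteq> (0 :: real^2)"
      using False by (auto simp: vec_eq_iff forall_2)
    ultimately show ?thesis
      unfolding Sp_def by blast
  qed
  ultimately have "Max Sp = L"
    by (intro Max_eqI) auto
  then show ?thesis
    by (simp add: lambda_max_def Sp_def L_def D_def a_def b_def d_def)
qed

lemma sym2_pos_def_of_lambda_max_less:
  fixes U :: "real^2^2"
  assumes "U$1$2 = U$2$1" and "lambda_max U < e"
  shows "0 < e - U$1$1" and "0 < (e - U$1$1) * (e - U$2$2) - (U$1$2)\<^sup>2"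
proof -
  define a b d where "a = U$1$1" and "b = U$1$2" and "d = U$2$2"
  define D where "D = sqrt (((a - d) / 2)\<^sup>2 + b\<^sup>2)"
  have "D \<ge> 0" and D2: "D\<^sup>2 = ((a - d) / 2)\<^sup>2 + b\<^sup>2"
    unfolding D_def by simp_all
  have L: "(a + d) / 2 + D < e"
    using assms by (simp add: lambda_max_sym2 a_def b_def d_def D_def)
  have "\<bar>(a - d) / 2\<bar> \<le> D"
    unfolding D_def by (rule real_sqrt_ge_abs1)
  then show "0 < e - U$1$1"
    using L by (auto simp: a_def abs_le_iff field_simps)
  (* e Id - U has the eigenvalues e - (a + d)/2 \<mp> D *)
  have "(e - a) * (e - d) - b\<^sup>2 = (e - ((a + d) / 2 + D)) * (e - ((a + d) / 2 - D))"
    using D2 by (simp add: power2_eq_square field_simps)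
  also have "\<dots> > 0"
    using L \<open>D \<ge> 0\<close> by simp
  finally show "0 < (e - U$1$1) * (e - U$2$2) - (U$1$2)\<^sup>2"
    by (simp add: a_def b_def d_def)
qed

lemma sym2_eq_sum_outer:
  fixes P :: "real^2^2"
  assumes "P$1$2 = P$2$1" and "0 < P$1$1" and "0 < P$1$1 * P$2$2 - (P$1$2)\<^sup>2"
  obtains w u where "w \<noteq> 0" and "u \<noteq> 0" and "P = outer w w + outer u u"
    and "\<And>r. \<exists>\<mu> \<kappa>. r = \<mu> *\<^sub>R w + \<kappa> *\<^sub>R u"
proof -
  (* Cholesky factorisation *)
  define a where "a = sqrt (P$1$1)"
  define q where "q = sqrt ((P$1$1 * P$2$2 - (P$1$2)\<^sup>2) / P$1$1)"
  define u :: "real^2" where "u = vector [a, P$1$2 / a]"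
  define w :: "real^2" where "w = vector [0, q]"
  have "a > 0" and a2: "a * a = P$1$1"
    using assms(2) by (simp_all add: a_def)
  have "q > 0" and q2: "q * q = (P$1$1 * P$2$2 - (P$1$2)\<^sup>2) / P$1$1"
    using assms(2,3) by (simp_all add: q_def)
  have "(P$1$2 / a) * (P$1$2 / a) = (P$1$2)\<^sup>2 / P$1$1"
    by (simp add: a2[symmetric] power2_eq_square)
  then have P22: "P$2$2 = q * q + (P$1$2 / a) * (P$1$2 / a)"
    unfolding q2 using assms(2) by (simp add: field_simps)
  have "w \<noteq> 0" and "u \<noteq> 0"
    using \<open>q > 0\<close> \<open>a > 0\<close> by (auto simp: w_def u_def vec_eq_iff forall_2)
  moreover have "P = outer w w + outer u u"
    using assms(1) \<open>a > 0\<close> a2 P22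
    by (simp add: vec_eq_iff forall_2 outer_def w_def u_def)
  moreover have "r = ((r$2 - r$1 * P$1$2 / (a * a)) / q) *\<^sub>R w + (r$1 / a) *\<^sub>R u" for r :: "real^2"
    using \<open>a > 0\<close> \<open>q > 0\<close> by (simp add: vec_eq_iff forall_2 w_def u_def field_simps)
  ultimately show ?thesis
    using that by blast
qed

lemma eq_sum_outer_of_lambda_max_less:
  fixes U :: "real^2^2"
  assumes "transpose U = U" and "lambda_max U < e"
  obtains w u where "w \<noteq> 0" and "u \<noteq> 0" and "e *\<^sub>R mat 1 - U = outer w w + outer u u"
    and "\<And>r. \<exists>\<mu> \<kappa>. r = \<mu> *\<^sub>R w + \<kappa> *\<^sub>R u"
proof (rule sym2_eq_sum_outer)
  have "U$1$2 = U$2$1"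
    using assms(1) by (simp add: transpose_eq_self_iff_2)
  then show "(e *\<^sub>R mat 1 - U)$1$2 = (e *\<^sub>R mat 1 - U)$2$1"
    and "0 < (e *\<^sub>R mat 1 - U)$1$1"
    and "0 < (e *\<^sub>R mat 1 - U)$1$1 * (e *\<^sub>R mat 1 - U)$2$2 - ((e *\<^sub>R mat 1 - U)$1$2)\<^sup>2"
    using sym2_pos_def_of_lambda_max_less[OF _ assms(2)] by (simp_all add: mat_def)
qed (use that in blast)

theorem lemma2p7:
  fixes p :: real and v m :: "real^2" and \<sigma> :: "real^2^2" and e :: real
  assumes "(v, m, \<sigma>, e) \<in> Zspace"
    and "m \<noteq> (e + p) *\<^sub>R v"
    and "lambda_max (outer v v - \<sigma>) < e"
  shows "(v, m, \<sigma>, e) \<in> lam1 (lam1 (Kset p))"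
proof -
  have "transpose (outer v v - \<sigma>) = outer v v - \<sigma>" and "trace \<sigma> = 0"
    using assms(1) by (simp_all add: Zspace_def transpose_eq_self_iff_2 outer_def mult.commute)
  define P where "P = e *\<^sub>R mat 1 - (outer v v - \<sigma>)"
  define r where "r = m - (e + p) *\<^sub>R v"
  obtain w u \<mu> \<kappa> where "w \<noteq> 0" and "u \<noteq> 0" and P: "P = outer w w + outer u u"
    and r: "r = \<mu> *\<^sub>R w + \<kappa> *\<^sub>R u"
    using eq_sum_outer_of_lambda_max_less[OF \<open>transpose (outer v v - \<sigma>) = _\<close> assms(3)]
    unfolding P_def[symmetric] by metis
  have z: "(v, m, \<sigma>, e) = Zparam p v P r"
    using \<open>trace \<sigma> = 0\<close>
    by (simp add: Zparam_def P_def r_def trace_def sum_2 mat_def outer_def inner_vec_def)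
  have "Zparam p v' (outer w w) (\<mu> *\<^sub>R w) \<in> lam1 (Kset p)" for v'
    using Zparam_add_rank_one_in_lam1[of p 0 0 "Kset p"] Zparam_0_0_in_Kset \<open>w \<noteq> 0\<close>
    by (simp add: transpose_eq_self_iff_2)
  then have "Zparam p v P r \<in> lam1 (lam1 (Kset p))"
    unfolding P r by (rule Zparam_add_rank_one_in_lam1[OF _ transpose_outer_self \<open>u \<noteq> 0\<close>])
  then show ?thesis
    unfolding z .
qed

end
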